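(* Let $n\ge 1$, $m,m'\ge0$, $\alpha\in\mathbb{Z}_{\ge0}^m$, $\beta\in\mathbb{Z}_{\ge0}^{m'}$. The dimension of the space of $S_n$-invariants in the homogeneous component of $\mathbb{C}[X_{n\times m};\Theta_{n\times m'}]$ of degree $\alpha$ in the commuting variables and $\beta$ in the Grassmannian variables equals the number of multiset partitions $\pi$ with content $\{\!\{1^{\alpha_1},\dots,m^{\alpha_m},\bar1^{\beta_1},\dots,\overline{m'}^{\beta_{m'}}\}\!\}$ and at most $n$ parts, such that no barred entry occurs more than once in any part, and every part containing an odd number of barred entries occurs at most once in $\pi$. (Equivalently, the $S_n$-invariants of $\mathbb{C}[X_{n\times m};\Theta_{n\times m'}]$ have a basis indexed by such super multiset partitions of length at most $n$.)
   Context: $\mathbb{C}[X_{n\times m};\Theta_{n\times m'}]$ is the associative $\mathbb{C}$-algebra generated by $x_{rk}$ ($1\le r\le n$, $1\le k\le m$) and $\theta_{ri}$ ($1\le r\le n$, $1\le i\le m'$) with: the $x_{rk}$ commute with each other and with all $\theta_{si}$; $\theta_{ri}\theta_{sj}=-\theta_{sj}\theta_{ri}$ for $(r,i)\ne(s,j)$; $\theta_{ri}^2=0$. $S_n$ acts by algebra automorphisms via $\sigma(x_{rk})=x_{\sigma(r)k}$, $\sigma(\theta_{ri})=\theta_{\sigma(r)i}$. The degree-$(\alpha,\beta)$ component is spanned by monomials of total degree $\alpha_k$ in $x_{1k},\dots,x_{nk}$ for each $k$ and $\beta_i$ in $\theta_{1i},\dots,\theta_{ni}$ for each $i$. Multisets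 are over the alphabet $\{1,\dots,m\}\cup\{\bar1,\dots,\overline{m'}\}$, entries $\bar j$ being called barred; a multiset partition of $S$ is a multiset of non-empty multisets (parts) whose multiset union is $S$. *)

theory Defs
  imports Complex_Main "HOL-Library.Multiset" "HOL-Combinatorics.Permutations" "HOL-Library.Function_Algebras"
begin

(* Monomials of C[X_{n x m}; Theta_{n x m'}], indices 0-based:
   a monomial is a pair (e, T) standing for
     prod_{r,k} x_{rk}^(e r k) * theta_{a_1} ... theta_{a_p}
   where T = {a_1 < ... < a_p} (lexicographic order on pairs (r,i))
   is the set of Grassmann variables occurring (theta^2 = 0). These
   monomials form a C-basis of the algebra. *)
type_synonym smon = "(nat \<Rightarrow> nat \<Rightarrow> nat) \<times> (nat \<times> nat) set"

definition lexless :: "nat \<times> nat \<Rightarrow> nat \<times> nat \<Rightarrow> bool" where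
  "lexless a b \<longleftrightarrow> fst a < fst b \<or> (fst a = fst b \<and> snd a < snd b)"

definition mons :: "nat \<Rightarrow> nat \<Rightarrow> nat \<Rightarrow> (nat \<Rightarrow> nat) \<Rightarrow> (nat \<Rightarrow> nat) \<Rightarrow> smon set" where
  "mons n m m' \<alpha> \<beta> = {(e, T).
      (\<forall>r k. \<not> (r < n \<and> k < m) \<longrightarrow> e r k = 0) \<and>
      T \<subseteq> {..<n} \<times> {..<m'} \<and>
      (\<forall>k<m. (\<Sum>r<n. e r k) = \<alpha> k) \<and>
      (\<forall>i<m'. card {r. (r, i) \<in> T} = \<beta> i)}"

(* sigma(x_{rk}) = x_{sigma r, k}, sigma(theta_{ri}) = theta_{sigma r, i} *)
definition act_mon :: "(nat \<Rightarrow> nat) \<Rightarrow> smon \<Rightarrow> smon" where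
  "act_mon \<sigma> \<mu> = ((\<lambda>r k. fst \<mu> (inv \<sigma> r) k), (\<lambda>(r, i). (\<sigma> r, i)) ` snd \<mu>)"

(* sign arising from reordering theta_{sigma a_1} ... theta_{sigma a_p}
   into increasing order: sigma(mu) = act_sign sigma mu * act_mon sigma mu *)
definition act_sign :: "(nat \<Rightarrow> nat) \<Rightarrow> smon \<Rightarrow> complex" where
  "act_sign \<sigma> \<mu> = (-1) ^ card {(a, b). a \<in> snd \<mu> \<and> b \<in> snd \<mu> \<and> lexless a b \<and>
        lexless (\<sigma> (fst b), snd b) (\<sigma> (fst a), snd a)}"

(* elements of the degree-(alpha,beta) component, as coefficient functions
   on the monomial basis, which are S_n-invariant *)
definition inv_component :: "nat \<Rightarrow> nat \<Rightarrow> nat \<Rightarrow> (nat \<Rightarrow> nat) \<Rightarrow> (nat \<Rightarrow> nat) \<Rightarrow> (smon \<Rightarrow> complex) set" where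
  "inv_component n m m' \<alpha> \<beta> = {f.
      (\<forall>\<mu>. \<mu> \<notin> mons n m m' \<alpha> \<beta> \<longrightarrow> f \<mu> = 0) \<and>
      (\<forall>\<sigma>. \<sigma> permutes {..<n} \<longrightarrow>
         (\<forall>\<mu> \<in> mons n m m' \<alpha> \<beta>. f (act_mon \<sigma> \<mu>) = act_sign \<sigma> \<mu> * f \<mu>))}"

definition cdim :: "(smon \<Rightarrow> complex) set \<Rightarrow> nat" where
  "cdim V = vector_space.dim (\<lambda>c f x. c * f x) V"

(* alphabet: Inl k = unbarred k, Inr i = barred i *)
definition content :: "nat \<Rightarrow> nat \<Rightarrow> (nat \<Rightarrow> nat) \<Rightarrow> (nat \<Rightarrow> nat) \<Rightarrow> (nat + nat) multiset" where
  "content m m' \<alpha> \<beta> = (\<Sum>k<m. replicate_mset (\<alpha> k) (Inl k)) + (\<Sum>i<m'. replicate_mset (\<beta> i) (Inr i))"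

definition barred_count :: "(nat + nat) multiset \<Rightarrow> nat" where
  "barred_count p = size (filter_mset (\<lambda>x. \<exists>i. x = Inr i) p)"

definition super_mset_partitions :: "nat \<Rightarrow> nat \<Rightarrow> nat \<Rightarrow> (nat \<Rightarrow> nat) \<Rightarrow> (nat \<Rightarrow> nat) \<Rightarrow> (nat + nat) multiset multiset set" where
  "super_mset_partitions n m m' \<alpha> \<beta> = {\<pi>.
      (\<forall>p \<in># \<pi>. p \<noteq> {#}) \<and> sum_mset \<pi> = content m m' \<alpha> \<beta> \<and> size \<pi> \<le> n \<and>
      (\<forall>p \<in># \<pi>. \<forall>i. count p (Inr i) \<le> 1) \<and>
      (\<forall>p \<in># \<pi>. odd (barred_count p) \<longrightarrow> count \<pi> p = 1)}"

end

theory Submission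
  imports Defs "HOL-Library.Product_Lexorder"
begin

text \<open>
  The symmetric group permutes the basis monomials of degree \<open>(\<alpha>, \<beta>)\<close> up to sign, and a
  monomial is determined up to this action by the multiset of its rows, each row read as a
  multiset over the alphabet (a barred letter occurs at most once in a row since
  \<open>\<theta>\<^sup>2 = 0\<close>). If two equal rows have an odd number of Grassmann variables, the
  transposition swapping them fixes the monomial but acts by \<open>-1\<close>, so every invariant vanishes
  on that orbit. Otherwise every permutation fixing the monomial acts by \<open>+1\<close>, so the signed
  orbit sum is a well-defined invariant, and these orbit sums form a basis of the invariants.
  The surviving orbits are exactly the super multiset partitions with at most \<open>n\<close> parts.
\<close>

section \<open>Parity of inversions\<close>

lemma minus_one_power_card_sym_diff:
  assumes "finite A" "finite B"
  shows "(-1::'a::ring_1) ^ card (sym_diff A B) = (-1) ^ card A * (-1) ^ card B"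
proof -
  have "card A = card (A - B) + card (A \<inter> B)" "card B = card (B - A) + card (A \<inter> B)"
    using assms by (metis card_Diff_subset_Int card_mono Int_commute le_add_diff_inverse2 finite_Int inf_le1)+
  moreover have "card (sym_diff A B) = card (A - B) + card (B - A)"
    using assms by (simp add: card_Un_disjoint disjoint_iff)
  ultimately have "card A + card B = card (sym_diff A B) + 2 * card (A \<inter> B)"
    by simp
  then have "(-1::'a) ^ card A * (-1) ^ card B = (-1) ^ (card (sym_diff A B) + 2 * card (A \<inter> B))"
    by (simp add: power_add[symmetric])
  then show ?thesis
    by (simp add: power_add power_mult)
qed

definition inversions :: "('a::linorder \<Rightarrow> 'b::linorder) \<Rightarrow> 'a set \<Rightarrow> ('a \<times> 'a) set" where
  "inversions g T = {(a, b). a \<in> T \<and> b \<in> T \<and> a < b \<and> g b < g a}"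

lemma finite_inversions: "finite T \<Longrightarrow> finite (inversions g T)"
  by (rule finite_subset[of _ "T \<times> T"]) (auto simp: inversions_def)

definition image_inversions ::
    "('a::linorder \<Rightarrow> 'b::linorder) \<Rightarrow> ('b \<Rightarrow> 'c::linorder) \<Rightarrow> 'a set \<Rightarrow> ('a \<times> 'a) set" where
  "image_inversions g h T = {(a, b). a \<in> T \<and> b \<in> T \<and> a < b \<and>
     (g a < g b \<and> h (g b) < h (g a) \<or> g b < g a \<and> h (g a) < h (g b))}"

lemma inversions_comp:
  assumes g: "inj_on g T" and h: "inj_on h (g ` T)"
  shows "inversions (h \<circ> g) T = sym_diff (inversions g T) (image_inversions g h T)"
proof -
  have "(a, b) \<in> inversions (h \<circ> g) T \<longleftrightarrow> (a, b) \<in> sym_diff (inversions g T) (image_inversions g h T)"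
    for a b
  proof (cases "a \<in> T \<and> b \<in> T \<and> a < b")
    case True
    then have "g a \<noteq> g b" "h (g a) \<noteq> h (g b)"
      using g h by (auto dest: inj_onD)
    moreover have "(a, b) \<in> inversions (h \<circ> g) T \<longleftrightarrow> h (g b) < h (g a)"
      "(a, b) \<in> inversions g T \<longleftrightarrow> g b < g a"
      "(a, b) \<in> image_inversions g h T \<longleftrightarrow>
         g a < g b \<and> h (g b) < h (g a) \<or> g b < g a \<and> h (g a) < h (g b)"
      using True by (simp_all add: inversions_def image_inversions_def)
    ultimately show ?thesis
      by (metis DiffI DiffD1 DiffD2 UnE UnI1 UnI2 less_asym neq_iff)
  qed (auto simp: inversions_def image_inversions_def)
  then show ?thesis by auto
qed

lemma card_image_inversions:
  assumes g: "inj_on g T"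
  shows "card (image_inversions g h T) = card (inversions h (g ` T))"
proof -
  define sort_pair where "sort_pair = (\<lambda>(a, b). if g a < g b then (g a, g b) else (g b, g a))"
  have "inj_on sort_pair (image_inversions g h T)"
  proof (rule inj_onI, clarify)
    fix a b c d
    assume "(a, b) \<in> image_inversions g h T" "(c, d) \<in> image_inversions g h T"
      and "sort_pair (a, b) = sort_pair (c, d)"
    then have "a < b" "c < d" "a = c \<and> b = d \<or> a = d \<and> b = c"
      using g by (auto simp: image_inversions_def sort_pair_def split: if_splits dest: inj_onD)
    then show "a = c \<and> b = d" by auto
  qed
  moreover have "sort_pair ` image_inversions g h T = inversions h (g ` T)"
  proof
    show "sort_pair ` image_inversions g h T \<subseteq> inversions h (g ` T)"
    proof
      fix p assume "p \<in> sort_pair ` image_inversions g h T"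
      then obtain a b where "(a, b) \<in> image_inversions g h T" "p = sort_pair (a, b)" by auto
      then show "p \<in> inversions h (g ` T)"
        by (cases "g a < g b") (auto simp: image_inversions_def sort_pair_def inversions_def)
    qed
    show "inversions h (g ` T) \<subseteq> sort_pair ` image_inversions g h T"
    proof
      fix p assume "p \<in> inversions h (g ` T)"
      then obtain a b where p: "p = (g a, g b)" and ab: "a \<in> T" "b \<in> T" "g a < g b" "h (g b) < h (g a)"
        by (auto simp: inversions_def)
      then have "a \<noteq> b" by auto
      then have "(a, b) \<in> image_inversions g h T \<or> (b, a) \<in> image_inversions g h T"
        using ab by (auto simp: image_inversions_def neq_iff)
      then show "p \<in> sort_pair ` image_inversions g h T"
        using ab p by (force simp: sort_pair_def)
    qed
  qed
  ultimately show ?thesis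
    by (metis card_image)
qed

lemma minus_one_power_card_inversions_comp:
  fixes g :: "'a::linorder \<Rightarrow> 'b::linorder" and h :: "'b \<Rightarrow> 'c::linorder"
  assumes T: "finite T" and g: "inj_on g T" and h: "inj_on h (g ` T)"
  shows "(-1::'r::ring_1) ^ card (inversions (h \<circ> g) T)
    = (-1) ^ card (inversions g T) * (-1) ^ card (inversions h (g ` T))"
proof -
  have "finite (image_inversions g h T)"
    by (rule finite_subset[of _ "T \<times> T"]) (use T in \<open>auto simp: image_inversions_def\<close>)
  from minus_one_power_card_sym_diff[OF finite_inversions[of T g, OF T] this]
  show ?thesis
    by (simp add: inversions_comp[OF g h] card_image_inversions[OF g])
qed

lemma card_eq_1_iff_all_eq:
  assumes "x \<in> S"
  shows "card S = 1 \<longleftrightarrow> (\<forall>y \<in> S. y = x)"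
proof
  assume "card S = 1"
  then obtain y where "S = {y}" by (rule card_1_singletonE)
  then show "\<forall>y \<in> S. y = x" using assms by blast
next
  assume "\<forall>y \<in> S. y = x"
  then have "S = {x}" using assms by blast
  then show "card S = 1" by simp
qed

lemma sum_mset_filter_nonzero:
  "sum_mset (filter_mset (\<lambda>x. x \<noteq> 0) M) = sum_mset (M :: 'a::comm_monoid_add multiset)"
  by (induction M) auto

lemma multiset_eq_if_filter_neq_eq:
  assumes "size A = size B" and "filter_mset (\<lambda>x. x \<noteq> c) A = filter_mset (\<lambda>x. x \<noteq> c) B"
  shows "A = B"
proof (rule multiset_eqI)
  have size: "size M = size (filter_mset (\<lambda>x. x \<noteq> c) M) + count M c" for M :: "'a multiset"
  proof -
    have "M = filter_mset (\<lambda>x. x \<noteq> c) M + replicate_mset (count M c) c"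
      using multiset_partition[of M "\<lambda>x. x \<noteq> c"] by (simp add: filter_eq_replicate_mset)
    then show ?thesis by (metis size_union size_replicate_mset)
  qed
  fix x
  show "count A x = count B x"
  proof (cases "x = c")
    case True
    then show ?thesis using size[of A] size[of B] assms by simp
  next
    case False
    then show ?thesis using arg_cong[OF assms(2), of "\<lambda>M. count M x"] by simp
  qed
qed

lemma image_mset_nth_eq_mset: "image_mset (nth xs) (mset_set {..<length xs}) = mset xs"
  by (metis map_nth mset_map mset_set_upto_eq_mset_upto)

lemma image_mset_eq_permutation:
  fixes n :: nat
  assumes "image_mset f (mset_set {..<n}) = image_mset g (mset_set {..<n})"
  obtains p where "p permutes {..<n}" "\<And>r. r < n \<Longrightarrow> g r = f (p r)"
proof -
  have "mset (map g [0..<n]) = mset (map f [0..<n])"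
    using assms by (simp add: mset_set_upto_eq_mset_upto)
  then obtain p where p0: "p permutes {..<length (map f [0..<n])}"
    and perm: "permute_list p (map f [0..<n]) = map g [0..<n]"
    by (rule mset_eq_permutation)
  then have p: "p permutes {..<n}" by simp
  moreover have "g r = f (p r)" if "r < n" for r
  proof -
    have "map g [0..<n] ! r = map f [0..<n] ! p r"
      using permute_list_nth[OF p0, of r] that by (simp flip: perm)
    then show ?thesis using that permutes_in_image[OF p, of r] by simp
  qed
  ultimately show ?thesis using that by blast
qed

lemma sum_apply: "(\<Sum>v\<in>A. g v) y = (\<Sum>v\<in>A. g v y)"
  by (induction A rule: infinite_finite_induct) auto

lemma dim_function_space_eq_card:
  fixes V :: "('a \<Rightarrow> 'k::field) set" and b :: "'i \<Rightarrow> 'a \<Rightarrow> 'k" and x :: "'i \<Rightarrow> 'a"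
  assumes S: "finite S" and b: "\<And>i. i \<in> S \<Longrightarrow> b i \<in> V"
    and dual: "\<And>i j. i \<in> S \<Longrightarrow> j \<in> S \<Longrightarrow> b i (x j) = (if i = j then 1 else 0)"
    and expand: "\<And>f y. f \<in> V \<Longrightarrow> f y = (\<Sum>i\<in>S. f (x i) * b i y)"
  shows "vector_space.dim (\<lambda>c f y. c * f y) V = card S"
proof -
  interpret FV: vector_space "\<lambda>(c::'k) (f::'a \<Rightarrow> 'k) y. c * f y"
    by unfold_locales (auto simp: fun_eq_iff algebra_simps)
  have inj: "inj_on b S"
    by (rule inj_onI) (metis dual one_neq_zero)
  have "FV.independent (b ` S)"
  proof (rule FV.independent_if_scalars_zero)
    fix u v assume sum0: "(\<Sum>w\<in>b ` S. (\<lambda>y. u w * w y)) = 0" and "v \<in> b ` S"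
    then obtain i where i: "i \<in> S" "v = b i" by auto
    have "0 = (\<Sum>j\<in>S. u (b j) * b j (x i))"
      using arg_cong[OF sum0, of "\<lambda>g. g (x i)"] by (simp add: sum_apply sum.reindex[OF inj])
    also have "\<dots> = (\<Sum>j\<in>S. if j = i then u (b i) else 0)"
      using i dual by (intro sum.cong) auto
    also have "\<dots> = u (b i)"
      using S i by simp
    finally show "u v = 0" using i by simp
  qed (use S in simp)
  moreover have "V \<subseteq> FV.span (b ` S)"
  proof
    fix f assume "f \<in> V"
    then have "f = (\<Sum>i\<in>S. (\<lambda>y. f (x i) * b i y))"
      using expand by (simp add: fun_eq_iff sum_apply)
    also have "\<dots> \<in> FV.span (b ` S)"
      by (intro FV.span_sum FV.span_scale FV.span_base) auto
    finally show "f \<in> FV.span (b ` S)" .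
  qed
  ultimately show ?thesis
    using b card_image[OF inj] by (intro FV.dim_unique[of "b ` S"]) auto
qed

section \<open>The symmetric group acting on monomials\<close>

definition row_map :: "(nat \<Rightarrow> nat) \<Rightarrow> nat \<times> nat \<Rightarrow> nat \<times> nat" where
  "row_map \<sigma> = (\<lambda>(r, i). (\<sigma> r, i))"

lemma row_map_apply [simp]: "row_map \<sigma> (r, i) = (\<sigma> r, i)"
  by (simp add: row_map_def)

lemma row_map_comp: "row_map (\<sigma> \<circ> \<tau>) = row_map \<sigma> \<circ> row_map \<tau>"
  by (auto simp: row_map_def)

lemma inj_row_map: "inj \<sigma> \<Longrightarrow> inj (row_map \<sigma>)"
  by (auto simp: row_map_def inj_def)

lemma mem_row_map_image:
  assumes "bij \<sigma>"
  shows "(r, i) \<in> row_map \<sigma> ` T \<longleftrightarrow> (inv \<sigma> r, i) \<in> T"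
proof
  assume "(r, i) \<in> row_map \<sigma> ` T"
  then obtain s where "(s, i) \<in> T" "r = \<sigma> s" by (auto simp: row_map_def)
  then show "(inv \<sigma> r, i) \<in> T" using assms by (simp add: bij_is_inj)
next
  assume "(inv \<sigma> r, i) \<in> T"
  moreover have "row_map \<sigma> (inv \<sigma> r, i) = (r, i)" using assms by (simp add: bij_is_surj surj_f_inv_f)
  ultimately show "(r, i) \<in> row_map \<sigma> ` T" by (metis image_eqI)
qed

lemma fst_act_mon [simp]: "fst (act_mon \<sigma> \<mu>) r k = fst \<mu> (inv \<sigma> r) k"
  by (simp add: act_mon_def)

lemma snd_act_mon [simp]: "snd (act_mon \<sigma> \<mu>) = row_map \<sigma> ` snd \<mu>"
  by (simp add: act_mon_def row_map_def)

lemma act_sign_eq_inversions: "act_sign \<sigma> \<mu> = (-1) ^ card (inversions (row_map \<sigma>) (snd \<mu>))"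
proof -
  have "lexless = (<)"
    by (auto simp: fun_eq_iff lexless_def less_prod_def')
  then show ?thesis
    by (simp add: act_sign_def inversions_def row_map_def case_prod_beta)
qed

lemma act_mon_id [simp]: "act_mon id \<mu> = \<mu>"
  by (simp add: act_mon_def prod_eq_iff row_map_def)

lemma act_sign_id [simp]: "act_sign id \<mu> = 1"
proof -
  have "inversions (row_map id) (snd \<mu>) = {}"
    by (auto simp: inversions_def row_map_def)
  then show ?thesis by (simp add: act_sign_eq_inversions)
qed

lemma act_mon_comp:
  assumes "bij \<sigma>" "bij \<tau>"
  shows "act_mon (\<sigma> \<circ> \<tau>) \<mu> = act_mon \<sigma> (act_mon \<tau> \<mu>)"
  using assms by (simp add: prod_eq_iff fun_eq_iff o_inv_distrib row_map_comp image_comp)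

lemma act_sign_comp:
  assumes "inj \<sigma>" "inj \<tau>" "finite (snd \<mu>)"
  shows "act_sign (\<sigma> \<circ> \<tau>) \<mu> = act_sign \<sigma> (act_mon \<tau> \<mu>) * act_sign \<tau> \<mu>"
  using minus_one_power_card_inversions_comp[OF assms(3) inj_on_subset[OF inj_row_map[OF assms(2)]]
      inj_on_subset[OF inj_row_map[OF assms(1)]]]
  by (simp add: act_sign_eq_inversions row_map_comp mult.commute)

lemma act_mon_inv_act_mon: "\<sigma> permutes S \<Longrightarrow> act_mon (inv \<sigma>) (act_mon \<sigma> \<mu>) = \<mu>"
  by (metis act_mon_comp act_mon_id permutes_bij permutes_inv permutes_inv_o(2))

lemma finite_snd_of_mons: "\<mu> \<in> mons n m m' \<alpha> \<beta> \<Longrightarrow> finite (snd \<mu>)"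
  using finite_subset[of "snd \<mu>" "{..<n} \<times> {..<m'}"] by (auto simp: mons_def)

lemma act_mon_in_mons:
  assumes \<sigma>: "\<sigma> permutes {..<n}" and \<mu>: "\<mu> \<in> mons n m m' \<alpha> \<beta>"
  shows "act_mon \<sigma> \<mu> \<in> mons n m m' \<alpha> \<beta>"
proof -
  obtain e T where eT: "\<mu> = (e, T)" by (cases \<mu>)
  have inv\<sigma>: "inv \<sigma> permutes {..<n}" using \<sigma> by (rule permutes_inv)
  have "act_mon \<sigma> \<mu> = (\<lambda>r k. e (inv \<sigma> r) k, row_map \<sigma> ` T)"
    using eT by (simp add: prod_eq_iff fun_eq_iff)
  moreover have "e (inv \<sigma> r) k = 0" if "\<not> (r < n \<and> k < m)" for r k
    using that \<mu> eT permutes_not_in[OF inv\<sigma>, of r] permutes_in_image[OF inv\<sigma>, of r]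
    by (cases "r < n") (auto simp: mons_def)
  moreover have "row_map \<sigma> ` T \<subseteq> {..<n} \<times> {..<m'}"
    using \<mu> eT permutes_in_image[OF \<sigma>] by (auto simp: mons_def row_map_def)
  moreover have "(\<Sum>r<n. e (inv \<sigma> r) k) = (\<Sum>r<n. e r k)" for k
    using sum.reindex_bij_betw[OF permutes_imp_bij[OF inv\<sigma>], of "\<lambda>r. e r k"] by simp
  moreover have "card {r. (r, i) \<in> row_map \<sigma> ` T} = card {r. (r, i) \<in> T}" for i
  proof -
    have "{r. (r, i) \<in> row_map \<sigma> ` T} = \<sigma> ` {r. (r, i) \<in> T}"
      by (force simp: row_map_def)
    then show ?thesis
      using card_image[OF inj_on_subset[OF permutes_inj[OF \<sigma>]]] by simp
  qed
  ultimately show ?thesis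
    using \<mu> eT unfolding mons_def by simp
qed

lemma finite_mons: "finite (mons n m m' \<alpha> \<beta>)"
proof -
  define N where "N = (\<Sum>k<m. \<alpha> k)"
  define E where "E = {e :: nat \<times> nat \<Rightarrow> nat. \<forall>x. (x \<in> {..<n} \<times> {..<m} \<longrightarrow> e x \<in> {..N}) \<and>
      (x \<notin> {..<n} \<times> {..<m} \<longrightarrow> e x = 0)}"
  have "finite E"
    unfolding E_def by (rule finite_set_of_finite_funs) auto
  moreover have "mons n m m' \<alpha> \<beta> \<subseteq> (\<lambda>(e, T). (curry e, T)) ` (E \<times> Pow ({..<n} \<times> {..<m'}))"
  proof
    fix \<mu> assume \<mu>: "\<mu> \<in> mons n m m' \<alpha> \<beta>"
    obtain e T where eT: "\<mu> = (e, T)" by (cases \<mu>)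
    have "e r k \<le> N" if "r < n" "k < m" for r k
    proof -
      have "e r k \<le> (\<Sum>r<n. e r k)" using that by (intro member_le_sum) auto
      also have "\<dots> = \<alpha> k" using \<mu> eT that by (simp add: mons_def)
      also have "\<dots> \<le> N" unfolding N_def using that by (intro member_le_sum) auto
      finally show ?thesis .
    qed
    then have "case_prod e \<in> E" using \<mu> eT by (auto simp: E_def mons_def)
    moreover have "\<mu> = (\<lambda>(e, T). (curry e, T)) (case_prod e, T)" using eT by simp
    moreover have "T \<subseteq> {..<n} \<times> {..<m'}" using \<mu> eT by (simp add: mons_def)
    ultimately show "\<mu> \<in> (\<lambda>(e, T). (curry e, T)) ` (E \<times> Pow ({..<n} \<times> {..<m'}))"
      by blast
  qed
  ultimately show ?thesis
    by (metis finite_subset finite_imageI finite_cartesian_product finite_Pow_iff finite_SigmaI finite_lessThan)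
qed

section \<open>Transpositions and stabilisers\<close>

definition same_rows :: "smon \<Rightarrow> nat \<Rightarrow> nat \<Rightarrow> bool" where
  "same_rows \<mu> r s \<longleftrightarrow> (\<forall>k. fst \<mu> r k = fst \<mu> s k) \<and> (\<forall>i. (r, i) \<in> snd \<mu> \<longleftrightarrow> (s, i) \<in> snd \<mu>)"

lemma act_mon_transpose_same_rows:
  assumes "same_rows \<mu> r s"
  shows "act_mon (transpose r s) \<mu> = \<mu>"
proof -
  have "fst \<mu> (transpose r s x) = fst \<mu> x" "(transpose r s x, i) \<in> snd \<mu> \<longleftrightarrow> (x, i) \<in> snd \<mu>" for x i
    using assms by (auto simp: same_rows_def transpose_def fun_eq_iff)
  then show ?thesis
    by (auto simp: prod_eq_iff fun_eq_iff mem_row_map_image inv_transpose_eq)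
qed

lemma inversions_row_map_transpose:
  assumes "r < s"
  shows "inversions (row_map (transpose r s)) T =
    {a \<in> T. fst a = r} \<times> {a \<in> T. fst a = s} \<union>
    {a \<in> T. fst a = r} \<times> {a \<in> T. r < fst a \<and> fst a < s} \<union>
    {a \<in> T. r < fst a \<and> fst a < s} \<times> {a \<in> T. fst a = s}"
proof (rule set_eqI, clarify)
  fix a1 a2 b1 b2 :: nat
  show "((a1, a2), (b1, b2)) \<in> inversions (row_map (transpose r s)) T \<longleftrightarrow>
    ((a1, a2), (b1, b2)) \<in> {a \<in> T. fst a = r} \<times> {a \<in> T. fst a = s} \<union>
    {a \<in> T. fst a = r} \<times> {a \<in> T. r < fst a \<and> fst a < s} \<union>
    {a \<in> T. r < fst a \<and> fst a < s} \<times> {a \<in> T. fst a = s}"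
    using assms
    by (cases "a1 = r"; cases "a1 = s"; cases "b1 = r"; cases "b1 = s") (auto simp: inversions_def)
qed

lemma act_sign_transpose_less:
  assumes fin: "finite (snd \<mu>)" and rs: "r < s"
    and same: "\<And>i. (r, i) \<in> snd \<mu> \<longleftrightarrow> (s, i) \<in> snd \<mu>"
  shows "act_sign (transpose r s) \<mu> = (-1) ^ card {i. (r, i) \<in> snd \<mu>}"
proof -
  define T where "T = snd \<mu>"
  define R where "R = {a \<in> T. fst a = r}"
  define S where "S = {a \<in> T. fst a = s}"
  define M where "M = {a \<in> T. r < fst a \<and> fst a < s}"
  have fin: "finite R" "finite S" "finite M" using fin by (auto simp: R_def S_def M_def T_def)
  have "R \<times> S \<inter> R \<times> M = {}" "(R \<times> S \<union> R \<times> M) \<inter> M \<times> S = {}"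
    using rs by (auto simp: R_def S_def M_def)
  then have "card (inversions (row_map (transpose r s)) T) =
      card R * card S + card R * card M + card M * card S"
    unfolding inversions_row_map_transpose[OF rs] R_def[symmetric] S_def[symmetric] M_def[symmetric]
    using fin by (simp add: card_Un_disjoint card_cartesian_product)
  moreover have "card R = card {i. (r, i) \<in> T}" "card S = card {i. (r, i) \<in> T}"
  proof -
    have "R = Pair r ` {i. (r, i) \<in> T}" "S = Pair s ` {i. (r, i) \<in> T}"
      using same by (auto simp: R_def S_def T_def image_iff)
    then show "card R = card {i. (r, i) \<in> T}" "card S = card {i. (r, i) \<in> T}"
      by (simp_all add: card_image inj_on_def)
  qed
  ultimately have "card (inversions (row_map (transpose r s)) T) =
      card {i. (r, i) \<in> T} * card {i. (r, i) \<in> T} + 2 * (card {i. (r, i) \<in> T} * card M)"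
    by (simp add: algebra_simps)
  then show ?thesis
    by (simp add: act_sign_eq_inversions T_def power_add power_mult minus_one_power_iff)
qed

lemma act_sign_transpose:
  assumes "finite (snd \<mu>)" "r \<noteq> s"
    and same: "\<And>i. (r, i) \<in> snd \<mu> \<longleftrightarrow> (s, i) \<in> snd \<mu>"
  shows "act_sign (transpose r s) \<mu> = (-1) ^ card {i. (r, i) \<in> snd \<mu>}"
proof (cases "r < s")
  case False
  then have "s < r" using \<open>r \<noteq> s\<close> by simp
  moreover have "{i. (s, i) \<in> snd \<mu>} = {i. (r, i) \<in> snd \<mu>}" using same by auto
  ultimately show ?thesis
    using act_sign_transpose_less[OF assms(1), of s r] same by (simp add: transpose_commute)
qed (use act_sign_transpose_less assms in blast)

lemma same_rows_if_act_mon_fixed: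
  assumes "bij \<sigma>" "act_mon \<sigma> \<mu> = \<mu>"
  shows "same_rows \<mu> r (\<sigma> r)"
proof -
  have "fst \<mu> (\<sigma> r) k = fst (act_mon \<sigma> \<mu>) (\<sigma> r) k" "(\<sigma> r, i) \<in> snd \<mu> \<longleftrightarrow> (\<sigma> r, i) \<in> snd (act_mon \<sigma> \<mu>)" for k i
    using assms(2) by simp_all
  then show ?thesis
    using assms(1) by (simp add: same_rows_def mem_row_map_image bij_is_inj)
qed

text \<open>
  Induction on the number of moved points: if \<open>\<sigma>\<close> fixes \<open>\<mu>\<close> and moves \<open>r\<close>, then rows
  \<open>r\<close> and \<open>\<sigma> r\<close> of \<open>\<mu>\<close> agree, so the transposition of \<open>r\<close> and \<open>\<sigma> r\<close> also fixes \<open>\<mu>\<close>,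
  acts with sign \<open>+1\<close>, and composing with it fixes one more point.
\<close>

lemma act_sign_stabilizer:
  assumes fin: "finite (snd \<mu>)"
    and even: "\<And>r s. r < n \<Longrightarrow> s < n \<Longrightarrow> r \<noteq> s \<Longrightarrow> same_rows \<mu> r s \<Longrightarrow> even (card {i. (r, i) \<in> snd \<mu>})"
  shows "\<sigma> permutes {..<n} \<Longrightarrow> act_mon \<sigma> \<mu> = \<mu> \<Longrightarrow> act_sign \<sigma> \<mu> = 1"
proof (induction "card {x. \<sigma> x \<noteq> x}" arbitrary: \<sigma> rule: less_induct)
  case less
  show ?case
  proof (cases "\<sigma> = id")
    case False
    then obtain r where r: "\<sigma> r \<noteq> r" by (auto simp: fun_eq_iff)
    define \<tau> where "\<tau> = transpose r (\<sigma> r)"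
    have rn: "r < n" "\<sigma> r < n"
      using r permutes_not_in[OF less.prems(1)] permutes_in_image[OF less.prems(1)] by auto
    have same: "same_rows \<mu> r (\<sigma> r)"
      by (rule same_rows_if_act_mon_fixed[OF permutes_bij[OF less.prems(1)] less.prems(2)])
    have \<tau>: "\<tau> permutes {..<n}" "act_mon \<tau> \<mu> = \<mu>"
      using rn same by (simp_all add: \<tau>_def permutes_swap_id act_mon_transpose_same_rows)
    have \<tau>\<sigma>: "\<tau> \<circ> \<sigma> permutes {..<n}" "act_mon (\<tau> \<circ> \<sigma>) \<mu> = \<mu>"
      using act_mon_comp[OF permutes_bij[OF \<tau>(1)] permutes_bij[OF less.prems(1)]] less.prems \<tau>
      by (simp_all add: permutes_compose)
    have "{x. (\<tau> \<circ> \<sigma>) x \<noteq> x} \<subset> {x. \<sigma> x \<noteq> x}"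
      using r permutes_inj[OF less.prems(1)] by (auto simp: \<tau>_def transpose_def dest: injD)
    moreover have "finite {x. \<sigma> x \<noteq> x}"
      using permutes_not_in[OF less.prems(1)] by (auto intro: finite_subset[of _ "{..<n}"])
    ultimately have "act_sign (\<tau> \<circ> \<sigma>) \<mu> = 1"
      using less.hyps \<tau>\<sigma> psubset_card_mono by blast
    moreover have "\<sigma> = \<tau> \<circ> (\<tau> \<circ> \<sigma>)"
      by (simp add: \<tau>_def fun_eq_iff)
    then have "act_sign \<sigma> \<mu> = act_sign \<tau> (act_mon (\<tau> \<circ> \<sigma>) \<mu>) * act_sign (\<tau> \<circ> \<sigma>) \<mu>"
      using act_sign_comp[OF permutes_inj[OF \<tau>(1)] permutes_inj[OF \<tau>\<sigma>(1)] fin] by simp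
    moreover have "act_sign \<tau> \<mu> = 1"
      using act_sign_transpose[OF fin r[symmetric]] same even[OF rn r[symmetric]]
      by (simp add: \<tau>_def same_rows_def)
    ultimately show ?thesis
      using \<tau>\<sigma>(2) by simp
  qed simp
qed

section \<open>Rows of a monomial\<close>

definition row_content :: "nat \<Rightarrow> nat \<Rightarrow> smon \<Rightarrow> nat \<Rightarrow> (nat + nat) multiset" where
  "row_content m m' \<mu> r = (\<Sum>k<m. replicate_mset (fst \<mu> r k) (Inl k)) +
     mset_set (Inr ` {i. i < m' \<and> (r, i) \<in> snd \<mu>})"

definition mon_in_range :: "nat \<Rightarrow> nat \<Rightarrow> nat \<Rightarrow> smon \<Rightarrow> bool" where
  "mon_in_range n m m' \<mu> \<longleftrightarrow>
     (\<forall>r k. \<not> (r < n \<and> k < m) \<longrightarrow> fst \<mu> r k = 0) \<and> snd \<mu> \<subseteq> {..<n} \<times> {..<m'}"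

lemma mon_in_range_if_mons: "\<mu> \<in> mons n m m' \<alpha> \<beta> \<Longrightarrow> mon_in_range n m m' \<mu>"
  by (auto simp: mons_def mon_in_range_def)

lemma count_row_content_Inl: "count (row_content m m' \<mu> r) (Inl k) = (if k < m then fst \<mu> r k else 0)"
  by (auto simp: row_content_def count_sum count_mset_set')

lemma count_row_content_Inr:
  "count (row_content m m' \<mu> r) (Inr i) = (if i < m' \<and> (r, i) \<in> snd \<mu> then 1 else 0)"
  by (auto simp: row_content_def count_sum count_mset_set')

lemma count_content_Inl: "count (content m m' \<alpha> \<beta>) (Inl k) = (if k < m then \<alpha> k else 0)"
  by (simp add: content_def count_sum)

lemma count_content_Inr: "count (content m m' \<alpha> \<beta>) (Inr i) = (if i < m' then \<beta> i else 0)"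
  by (simp add: content_def count_sum)

lemma barred_count_row_content:
  assumes "mon_in_range n m m' \<mu>"
  shows "barred_count (row_content m m' \<mu> r) = card {i. (r, i) \<in> snd \<mu>}"
proof -
  have "{i. i < m' \<and> (r, i) \<in> snd \<mu>} = {i. (r, i) \<in> snd \<mu>}"
    using assms by (auto simp: mon_in_range_def)
  moreover have "filter_mset (\<lambda>x. \<exists>i. x = Inr i) (row_content m m' \<mu> r) =
      mset_set (Inr ` {i. i < m' \<and> (r, i) \<in> snd \<mu>})"
  proof (rule multiset_eqI)
    fix x show "count (filter_mset (\<lambda>x. \<exists>i. x = Inr i) (row_content m m' \<mu> r)) x =
        count (mset_set (Inr ` {i. i < m' \<and> (r, i) \<in> snd \<mu>})) x"
      by (cases x) (auto simp: count_row_content_Inr count_mset_set')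
  qed
  ultimately show ?thesis
    by (simp add: barred_count_def card_image)
qed

lemma row_content_eq_iff:
  assumes "mon_in_range n m m' \<mu>" "mon_in_range n m m' \<nu>"
  shows "row_content m m' \<mu> r = row_content m m' \<nu> s \<longleftrightarrow>
     (\<forall>k. fst \<mu> r k = fst \<nu> s k) \<and> (\<forall>i. (r, i) \<in> snd \<mu> \<longleftrightarrow> (s, i) \<in> snd \<nu>)"
proof
  assume eq: "row_content m m' \<mu> r = row_content m m' \<nu> s"
  have "fst \<mu> r k = fst \<nu> s k" for k
    using arg_cong[OF eq, of "\<lambda>p. count p (Inl k)"] assms
    by (cases "k < m") (auto simp: count_row_content_Inl mon_in_range_def)
  moreover have "(r, i) \<in> snd \<mu> \<longleftrightarrow> (s, i) \<in> snd \<nu>" for i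
    using arg_cong[OF eq, of "\<lambda>p. count p (Inr i)"] assms
    by (cases "i < m'") (auto simp: count_row_content_Inr mon_in_range_def split: if_splits)
  ultimately show "(\<forall>k. fst \<mu> r k = fst \<nu> s k) \<and> (\<forall>i. (r, i) \<in> snd \<mu> \<longleftrightarrow> (s, i) \<in> snd \<nu>)"
    by blast
qed (simp add: row_content_def)

lemma same_rows_iff_row_content_eq:
  "mon_in_range n m m' \<mu> \<Longrightarrow> same_rows \<mu> r s \<longleftrightarrow> row_content m m' \<mu> r = row_content m m' \<mu> s"
  using row_content_eq_iff[of n m m' \<mu> \<mu>] by (simp add: same_rows_def)

lemma row_content_act_mon:
  "bij \<sigma> \<Longrightarrow> row_content m m' (act_mon \<sigma> \<mu>) r = row_content m m' \<mu> (inv \<sigma> r)"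
  by (simp add: row_content_def mem_row_map_image)

lemma mons_iff_sum_row_content:
  assumes "mon_in_range n m m' \<mu>"
  shows "\<mu> \<in> mons n m m' \<alpha> \<beta> \<longleftrightarrow> (\<Sum>r<n. row_content m m' \<mu> r) = content m m' \<alpha> \<beta>"
proof -
  have "{..<n} \<inter> {r. (r, i) \<in> snd \<mu>} = {r. (r, i) \<in> snd \<mu>}" for i
    using assms by (auto simp: mon_in_range_def)
  then have counts: "count (\<Sum>r<n. row_content m m' \<mu> r) (Inl k) = (if k < m then \<Sum>r<n. fst \<mu> r k else 0)"
    "count (\<Sum>r<n. row_content m m' \<mu> r) (Inr i) = (if i < m' then card {r. (r, i) \<in> snd \<mu>} else 0)"
    for k i
    by (simp_all add: count_sum count_row_content_Inl count_row_content_Inr sum.If_cases)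
  have "(\<Sum>r<n. row_content m m' \<mu> r) = content m m' \<alpha> \<beta> \<longleftrightarrow>
      (\<forall>k. count (\<Sum>r<n. row_content m m' \<mu> r) (Inl k) = count (content m m' \<alpha> \<beta>) (Inl k)) \<and>
      (\<forall>i. count (\<Sum>r<n. row_content m m' \<mu> r) (Inr i) = count (content m m' \<alpha> \<beta>) (Inr i))"
    unfolding multiset_eq_iff split_sum_all ..
  also have "\<dots> \<longleftrightarrow> \<mu> \<in> mons n m m' \<alpha> \<beta>"
    using assms by (auto simp: counts count_content_Inl count_content_Inr mons_def mon_in_range_def prod_eq_iff)
  finally show ?thesis ..
qed

definition row_partition :: "nat \<Rightarrow> nat \<Rightarrow> nat \<Rightarrow> smon \<Rightarrow> (nat + nat) multiset multiset" where
  "row_partition n m m' \<mu> =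
     filter_mset (\<lambda>p. p \<noteq> {#}) (image_mset (row_content m m' \<mu>) (mset_set {..<n}))"

definition odd_rows_distinct :: "nat \<Rightarrow> nat \<Rightarrow> nat \<Rightarrow> smon \<Rightarrow> bool" where
  "odd_rows_distinct n m m' \<mu> \<longleftrightarrow> (\<forall>r<n. odd (barred_count (row_content m m' \<mu> r)) \<longrightarrow>
      (\<forall>s<n. row_content m m' \<mu> s = row_content m m' \<mu> r \<longrightarrow> s = r))"

lemma sum_mset_row_partition: "sum_mset (row_partition n m m' \<mu>) = (\<Sum>r<n. row_content m m' \<mu> r)"
  using sum_mset_filter_nonzero[of "image_mset (row_content m m' \<mu>) (mset_set {..<n})"]
  by (simp add: row_partition_def sum_unfold_sum_mset)

lemma count_row_partition:
  "p \<noteq> {#} \<Longrightarrow> count (row_partition n m m' \<mu>) p = card {r \<in> {..<n}. row_content m m' \<mu> r = p}"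
  by (simp add: row_partition_def count_image_mset_eq_card_vimage)

lemma mem_row_partition:
  "p \<in># row_partition n m m' \<mu> \<longleftrightarrow> p \<noteq> {#} \<and> (\<exists>r<n. row_content m m' \<mu> r = p)"
  by (auto simp: row_partition_def)

lemma row_partition_act_mon:
  assumes \<sigma>: "\<sigma> permutes {..<n}"
  shows "row_partition n m m' (act_mon \<sigma> \<mu>) = row_partition n m m' \<mu>"
proof -
  have "image_mset (inv \<sigma>) (mset_set {..<n}) = mset_set {..<n}"
    using image_mset_mset_set[OF permutes_inj_on[OF permutes_inv[OF \<sigma>]]] permutes_image[OF permutes_inv[OF \<sigma>]]
    by simp
  moreover have "row_content m m' (act_mon \<sigma> \<mu>) = row_content m m' \<mu> \<circ> inv \<sigma>"
    using row_content_act_mon[OF permutes_bij[OF \<sigma>]] by (simp add: fun_eq_iff)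
  ultimately show ?thesis
    by (simp add: row_partition_def flip: multiset.map_comp)
qed

lemma barred_count_empty [simp]: "barred_count {#} = 0"
  by (simp add: barred_count_def)

lemma odd_rows_distinct_iff:
  "odd_rows_distinct n m m' \<mu> \<longleftrightarrow> (\<forall>p \<in># row_partition n m m' \<mu>.
     odd (barred_count p) \<longrightarrow> count (row_partition n m m' \<mu>) p = 1)"
  (is "_ \<longleftrightarrow> (\<forall>p \<in># ?P. _)")
proof -
  let ?row = "row_content m m' \<mu>"
  have card_iff: "card {s \<in> {..<n}. ?row s = ?row r} = 1 \<longleftrightarrow> (\<forall>s<n. ?row s = ?row r \<longrightarrow> s = r)"
    if "r < n" for r
  proof -
    have "r \<in> {s \<in> {..<n}. ?row s = ?row r}" using that by simp
    from card_eq_1_iff_all_eq[OF this] show ?thesis by (simp add: imp_conjL)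
  qed
  have "odd_rows_distinct n m m' \<mu> \<longleftrightarrow>
      (\<forall>r<n. odd (barred_count (?row r)) \<longrightarrow> card {s \<in> {..<n}. ?row s = ?row r} = 1)"
    using card_iff by (simp add: odd_rows_distinct_def)
  also have "\<dots> \<longleftrightarrow> (\<forall>p \<in># ?P. odd (barred_count p) \<longrightarrow> count ?P p = 1)"
  proof
    assume rows: "\<forall>r<n. odd (barred_count (?row r)) \<longrightarrow> card {s \<in> {..<n}. ?row s = ?row r} = 1"
    show "\<forall>p \<in># ?P. odd (barred_count p) \<longrightarrow> count ?P p = 1"
    proof (intro ballI impI)
      fix p assume "p \<in># ?P" "odd (barred_count p)"
      then obtain r where r: "r < n" "?row r = p" and "p \<noteq> {#}" by (auto simp: mem_row_partition)
      then show "count ?P p = 1"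
        using rows \<open>odd (barred_count p)\<close> by (simp add: count_row_partition flip: r(2))
    qed
  next
    assume parts: "\<forall>p \<in># ?P. odd (barred_count p) \<longrightarrow> count ?P p = 1"
    show "\<forall>r<n. odd (barred_count (?row r)) \<longrightarrow> card {s \<in> {..<n}. ?row s = ?row r} = 1"
    proof (intro allI impI)
      fix r assume "r < n" and odd: "odd (barred_count (?row r))"
      then have nonempty: "?row r \<noteq> {#}" by (metis barred_count_empty even_zero)
      then have "?row r \<in># ?P" using \<open>r < n\<close> by (auto simp: mem_row_partition)
      then have "count ?P (?row r) = 1" using parts odd by blast
      then show "card {s \<in> {..<n}. ?row s = ?row r} = 1"
        by (simp add: count_row_partition[OF nonempty])
    qed
  qed
  finally show ?thesis .
qed

lemma row_partition_in_super_mset_partitions_iff: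
  assumes \<mu>: "\<mu> \<in> mons n m m' \<alpha> \<beta>"
  shows "row_partition n m m' \<mu> \<in> super_mset_partitions n m m' \<alpha> \<beta> \<longleftrightarrow> odd_rows_distinct n m m' \<mu>"
proof -
  have "sum_mset (row_partition n m m' \<mu>) = content m m' \<alpha> \<beta>"
    using \<mu> sum_mset_row_partition mons_iff_sum_row_content[OF mon_in_range_if_mons[OF \<mu>]] by simp
  moreover have "size (row_partition n m m' \<mu>) \<le> n"
    using size_filter_mset_lesseq[of _ "image_mset (row_content m m' \<mu>) (mset_set {..<n})"]
    by (simp add: row_partition_def)
  moreover have "\<forall>p \<in># row_partition n m m' \<mu>. \<forall>i. count p (Inr i) \<le> 1"
    by (auto simp: mem_row_partition count_row_content_Inr)
  ultimately show ?thesis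
    by (simp add: super_mset_partitions_def mem_row_partition odd_rows_distinct_iff)
qed

definition valid_row :: "nat \<Rightarrow> nat \<Rightarrow> (nat + nat) multiset \<Rightarrow> bool" where
  "valid_row m m' p \<longleftrightarrow> set_mset p \<subseteq> Inl ` {..<m} \<union> Inr ` {..<m'} \<and> (\<forall>i. count p (Inr i) \<le> 1)"

definition mon_of_rows :: "nat \<Rightarrow> nat \<Rightarrow> (nat + nat) multiset list \<Rightarrow> smon" where
  "mon_of_rows m m' qs = ((\<lambda>r k. if r < length qs \<and> k < m then count (qs ! r) (Inl k) else 0),
     {(r, i). r < length qs \<and> i < m' \<and> Inr i \<in># qs ! r})"

lemma mon_in_range_mon_of_rows: "mon_in_range (length qs) m m' (mon_of_rows m m' qs)"
  by (auto simp: mon_in_range_def mon_of_rows_def)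

lemma row_content_mon_of_rows:
  assumes r: "r < length qs" and valid: "valid_row m m' (qs ! r)"
  shows "row_content m m' (mon_of_rows m m' qs) r = qs ! r"
proof (rule multiset_eqI)
  fix x
  show "count (row_content m m' (mon_of_rows m m' qs) r) x = count (qs ! r) x"
  proof (cases x)
    case (Inl k)
    then have "k < m" if "x \<in># qs ! r" using that valid by (auto simp: valid_row_def)
    then have "count (qs ! r) (Inl k) = 0" if "\<not> k < m" using that Inl by (meson not_in_iff)
    then show ?thesis
      using r Inl by (simp add: count_row_content_Inl mon_of_rows_def)
  next
    case (Inr i)
    then have "i < m'" if "x \<in># qs ! r" using that valid by (auto simp: valid_row_def)
    moreover have "Inr i \<in># qs ! r \<longleftrightarrow> count (qs ! r) (Inr i) = 1"
      using valid count_greater_zero_iff[of "qs ! r" "Inr i"] unfolding valid_row_def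
      by (metis One_nat_def le_neq_implies_less less_one not_gr_zero)
    ultimately show ?thesis
      using r Inr by (auto simp: count_row_content_Inr mon_of_rows_def not_in_iff)
  qed
qed

lemma row_partition_mon_of_rows:
  assumes "\<And>q. q \<in> set qs \<Longrightarrow> valid_row m m' q"
  shows "row_partition (length qs) m m' (mon_of_rows m m' qs) = filter_mset (\<lambda>p. p \<noteq> {#}) (mset qs)"
proof -
  have "image_mset (row_content m m' (mon_of_rows m m' qs)) (mset_set {..<length qs})
      = image_mset (nth qs) (mset_set {..<length qs})"
    using assms row_content_mon_of_rows by (intro image_mset_cong) simp
  then show ?thesis
    by (simp add: row_partition_def image_mset_nth_eq_mset)
qed

lemma valid_row_if_mem_super_mset_partition:
  assumes \<pi>: "\<pi> \<in> super_mset_partitions n m m' \<alpha> \<beta>" and p: "p \<in># \<pi>"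
  shows "valid_row m m' p"
proof -
  have "set_mset p \<subseteq> set_mset (sum_mset \<pi>)"
    using p by (metis UN_upper set_mset_Union_mset)
  also have "\<dots> \<subseteq> Inl ` {..<m} \<union> Inr ` {..<m'}"
  proof
    fix x assume "x \<in># sum_mset \<pi>"
    moreover have "sum_mset \<pi> = content m m' \<alpha> \<beta>"
      using \<pi> by (simp add: super_mset_partitions_def)
    ultimately have "0 < count (content m m' \<alpha> \<beta>) x"
      by (metis count_greater_zero_iff)
    then show "x \<in> Inl ` {..<m} \<union> Inr ` {..<m'}"
      by (cases x) (auto simp: count_content_Inl count_content_Inr split: if_splits)
  qed
  finally show ?thesis
    using \<pi> p by (simp add: valid_row_def super_mset_partitions_def)
qed

lemma row_partition_surj:
  assumes \<pi>: "\<pi> \<in> super_mset_partitions n m m' \<alpha> \<beta>"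
  shows "\<exists>\<mu> \<in> mons n m m' \<alpha> \<beta>. row_partition n m m' \<mu> = \<pi>"
proof -
  obtain ps where ps: "mset ps = \<pi>" using ex_mset by blast
  define qs where "qs = ps @ replicate (n - length ps) {#}"
  define \<mu> where "\<mu> = mon_of_rows m m' qs"
  have len: "length qs = n" using \<pi> ps by (auto simp: qs_def super_mset_partitions_def)
  have "valid_row m m' q" if "q \<in> set qs" for q
  proof (cases "q = {#}")
    case False
    then have "q \<in># \<pi>" using that ps by (auto simp: qs_def)
    then show ?thesis by (rule valid_row_if_mem_super_mset_partition[OF \<pi>])
  qed (simp add: valid_row_def)
  then have "row_partition n m m' \<mu> = filter_mset (\<lambda>p. p \<noteq> {#}) (mset qs)"
    unfolding \<mu>_def len[symmetric] by (rule row_partition_mon_of_rows)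
  moreover have "filter_mset (\<lambda>p. p \<noteq> {#}) (replicate_mset k {#}) = {#}" for k
    by (induction k) auto
  moreover have "filter_mset (\<lambda>p. p \<noteq> {#}) \<pi> = filter_mset (\<lambda>_. True) \<pi>"
    by (rule filter_mset_cong) (use \<pi> in \<open>auto simp: super_mset_partitions_def\<close>)
  ultimately have partition: "row_partition n m m' \<mu> = \<pi>"
    by (simp add: qs_def ps)
  moreover have "\<mu> \<in> mons n m m' \<alpha> \<beta>"
    using mons_iff_sum_row_content[OF mon_in_range_mon_of_rows[of qs m m', folded \<mu>_def, unfolded len]]
      sum_mset_row_partition[of n m m' \<mu>] partition \<pi>
    by (simp add: super_mset_partitions_def)
  ultimately show ?thesis by blast
qed

lemma orbit_if_row_partition_eq:
  assumes in_range: "mon_in_range n m m' \<mu>" "mon_in_range n m m' \<nu>"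
    and eq: "row_partition n m m' \<mu> = row_partition n m m' \<nu>"
  shows "\<exists>\<sigma>. \<sigma> permutes {..<n} \<and> act_mon \<sigma> \<mu> = \<nu>"
proof -
  have "image_mset (row_content m m' \<mu>) (mset_set {..<n}) = image_mset (row_content m m' \<nu>) (mset_set {..<n})"
    by (rule multiset_eq_if_filter_neq_eq[where c="{#}"]) (use eq in \<open>simp_all add: row_partition_def\<close>)
  then obtain p where p: "p permutes {..<n}"
    and rows: "\<And>r. r < n \<Longrightarrow> row_content m m' \<nu> r = row_content m m' \<mu> (p r)"
    by (rule image_mset_eq_permutation) blast
  have "fst \<mu> (p r) k = fst \<nu> r k" "(p r, i) \<in> snd \<mu> \<longleftrightarrow> (r, i) \<in> snd \<nu>" for r k i
  proof (atomize (full), cases "r < n")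
    case True
    then show "fst \<mu> (p r) k = fst \<nu> r k \<and> ((p r, i) \<in> snd \<mu> \<longleftrightarrow> (r, i) \<in> snd \<nu>)"
      using rows[OF True] row_content_eq_iff[OF in_range] by metis
  next
    case False
    then show "fst \<mu> (p r) k = fst \<nu> r k \<and> ((p r, i) \<in> snd \<mu> \<longleftrightarrow> (r, i) \<in> snd \<nu>)"
      using in_range permutes_not_in[OF p, of r] by (auto simp: mon_in_range_def)
  qed
  moreover have "inv (inv p) = p" "bij (inv p)"
    using permutes_bij[OF p] permutes_bij[OF permutes_inv[OF p]] by (simp_all add: inv_inv_eq)
  ultimately have "fst (act_mon (inv p) \<mu>) = fst \<nu>"
    and "(r, i) \<in> snd (act_mon (inv p) \<mu>) \<longleftrightarrow> (r, i) \<in> snd \<nu>" for r i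
    by (simp_all add: fun_eq_iff mem_row_map_image)
  then have "act_mon (inv p) \<mu> = \<nu>"
    by (simp add: prod_eq_iff set_eq_iff)
  then show ?thesis using permutes_inv[OF p] by blast
qed

section \<open>Signed orbit sums\<close>

lemma inv_component_vanishes:
  assumes \<mu>: "\<mu> \<in> mons n m m' \<alpha> \<beta>" and not_distinct: "\<not> odd_rows_distinct n m m' \<mu>"
    and f: "f \<in> inv_component n m m' \<alpha> \<beta>"
  shows "f \<mu> = 0"
proof -
  have in_range: "mon_in_range n m m' \<mu>" using \<mu> by (rule mon_in_range_if_mons)
  obtain r s where rs: "r < n" "s < n" "s \<noteq> r" "row_content m m' \<mu> s = row_content m m' \<mu> r"
    and odd: "odd (barred_count (row_content m m' \<mu> r))"
    using not_distinct by (auto simp: odd_rows_distinct_def)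
  then have same: "same_rows \<mu> r s"
    by (simp add: same_rows_iff_row_content_eq[OF in_range])
  have "act_sign (transpose r s) \<mu> = (-1) ^ card {i. (r, i) \<in> snd \<mu>}"
    using act_sign_transpose[OF finite_snd_of_mons[OF \<mu>]] rs same by (simp add: same_rows_def)
  also have "\<dots> = -1"
    using odd barred_count_row_content[OF in_range] by simp
  finally have sign: "act_sign (transpose r s) \<mu> = -1" .
  have "f (act_mon (transpose r s) \<mu>) = act_sign (transpose r s) \<mu> * f \<mu>"
    using f \<mu> rs by (simp add: inv_component_def permutes_swap_id)
  then show ?thesis
    using sign act_mon_transpose_same_rows[OF same] by simp
qed

lemma act_sign_eq_if_act_mon_eq:
  assumes \<mu>: "\<mu> \<in> mons n m m' \<alpha> \<beta>" and distinct: "odd_rows_distinct n m m' \<mu>"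
    and \<sigma>: "\<sigma> permutes {..<n}" and \<tau>: "\<tau> permutes {..<n}"
    and eq: "act_mon \<sigma> \<mu> = act_mon \<tau> \<mu>"
  shows "act_sign \<sigma> \<mu> = act_sign \<tau> \<mu>"
proof -
  have fin: "finite (snd \<mu>)" using \<mu> by (rule finite_snd_of_mons)
  define \<theta> where "\<theta> = inv \<tau> \<circ> \<sigma>"
  have \<theta>: "\<theta> permutes {..<n}"
    unfolding \<theta>_def using \<sigma> \<tau> by (simp add: permutes_compose permutes_inv)
  have fixed: "act_mon \<theta> \<mu> = \<mu>"
    using act_mon_comp[OF permutes_bij[OF permutes_inv[OF \<tau>]] permutes_bij[OF \<sigma>]]
      act_mon_inv_act_mon[OF \<tau>] eq by (simp add: \<theta>_def)
  have "even (card {i. (r, i) \<in> snd \<mu>})"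
    if "r < n" "s < n" "r \<noteq> s" "same_rows \<mu> r s" for r s
  proof -
    have "row_content m m' \<mu> s = row_content m m' \<mu> r"
      using that(4) same_rows_iff_row_content_eq[OF mon_in_range_if_mons[OF \<mu>]] by simp
    then have "even (barred_count (row_content m m' \<mu> r))"
      using that(1-3) distinct unfolding odd_rows_distinct_def by blast
    then show ?thesis
      using barred_count_row_content[OF mon_in_range_if_mons[OF \<mu>]] by simp
  qed
  then have "act_sign \<theta> \<mu> = 1"
    using act_sign_stabilizer[OF fin _ \<theta> fixed] by blast
  moreover have "\<sigma> = \<tau> \<circ> \<theta>"
    using permutes_inverses(1)[OF \<tau>] by (simp add: \<theta>_def fun_eq_iff)
  then have "act_sign \<sigma> \<mu> = act_sign \<tau> (act_mon \<theta> \<mu>) * act_sign \<theta> \<mu>"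
    using act_sign_comp[OF permutes_inj[OF \<tau>] permutes_inj[OF \<theta>] fin] by simp
  ultimately show ?thesis
    using fixed by simp
qed

text \<open>
  The signed orbit sum of \<open>\<mu>\<^sub>0\<close>, as a coefficient function: \<open>\<sigma>(\<mu>\<^sub>0)\<close> gets the sign with
  which \<open>\<sigma>\<close> acts on \<open>\<mu>\<^sub>0\<close>. The choice of \<open>\<sigma>\<close> is immaterial only when the odd rows of
  \<open>\<mu>\<^sub>0\<close> are distinct (\<open>act_sign_eq_if_act_mon_eq\<close>).
\<close>

definition orbit_vector :: "nat \<Rightarrow> smon \<Rightarrow> smon \<Rightarrow> complex" where
  "orbit_vector n \<mu>\<^sub>0 \<mu> = (if \<exists>\<sigma>. \<sigma> permutes {..<n} \<and> act_mon \<sigma> \<mu>\<^sub>0 = \<mu>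
     then act_sign (SOME \<sigma>. \<sigma> permutes {..<n} \<and> act_mon \<sigma> \<mu>\<^sub>0 = \<mu>) \<mu>\<^sub>0 else 0)"

lemma orbit_vector_act_mon:
  assumes "\<mu>\<^sub>0 \<in> mons n m m' \<alpha> \<beta>" "odd_rows_distinct n m m' \<mu>\<^sub>0" and \<sigma>: "\<sigma> permutes {..<n}"
  shows "orbit_vector n \<mu>\<^sub>0 (act_mon \<sigma> \<mu>\<^sub>0) = act_sign \<sigma> \<mu>\<^sub>0"
proof -
  let ?P = "\<lambda>\<tau>. \<tau> permutes {..<n} \<and> act_mon \<tau> \<mu>\<^sub>0 = act_mon \<sigma> \<mu>\<^sub>0"
  have "?P (SOME \<tau>. ?P \<tau>)" by (rule someI[of ?P \<sigma>]) (simp add: \<sigma>)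
  then have "act_sign (SOME \<tau>. ?P \<tau>) \<mu>\<^sub>0 = act_sign \<sigma> \<mu>\<^sub>0"
    using act_sign_eq_if_act_mon_eq[OF assms(1,2) _ \<sigma>] by blast
  then show ?thesis
    using \<sigma> by (auto simp: orbit_vector_def)
qed

lemma orbit_vector_support:
  assumes "\<mu>\<^sub>0 \<in> mons n m m' \<alpha> \<beta>" and "orbit_vector n \<mu>\<^sub>0 \<mu> \<noteq> 0"
  shows "\<mu> \<in> mons n m m' \<alpha> \<beta> \<and> row_partition n m m' \<mu> = row_partition n m m' \<mu>\<^sub>0"
proof -
  obtain \<sigma> where "\<sigma> permutes {..<n}" "act_mon \<sigma> \<mu>\<^sub>0 = \<mu>"
    using assms(2) by (auto simp: orbit_vector_def split: if_splits)
  then show ?thesis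
    using act_mon_in_mons row_partition_act_mon assms(1) by blast
qed

lemma orbit_vector_in_inv_component:
  assumes \<mu>\<^sub>0: "\<mu>\<^sub>0 \<in> mons n m m' \<alpha> \<beta>" and distinct: "odd_rows_distinct n m m' \<mu>\<^sub>0"
  shows "orbit_vector n \<mu>\<^sub>0 \<in> inv_component n m m' \<alpha> \<beta>"
proof -
  have "orbit_vector n \<mu>\<^sub>0 (act_mon \<rho> \<mu>) = act_sign \<rho> \<mu> * orbit_vector n \<mu>\<^sub>0 \<mu>"
    if \<rho>: "\<rho> permutes {..<n}" for \<rho> \<mu>
  proof (cases "\<exists>\<sigma>. \<sigma> permutes {..<n} \<and> act_mon \<sigma> \<mu>\<^sub>0 = \<mu>")
    case True
    then obtain \<sigma> where \<sigma>: "\<sigma> permutes {..<n}" and \<mu>: "act_mon \<sigma> \<mu>\<^sub>0 = \<mu>" by blast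
    have "act_mon \<rho> \<mu> = act_mon (\<rho> \<circ> \<sigma>) \<mu>\<^sub>0"
      using act_mon_comp[OF permutes_bij[OF \<rho>] permutes_bij[OF \<sigma>]] \<mu> by simp
    then have "orbit_vector n \<mu>\<^sub>0 (act_mon \<rho> \<mu>) = act_sign (\<rho> \<circ> \<sigma>) \<mu>\<^sub>0"
      using orbit_vector_act_mon[OF \<mu>\<^sub>0 distinct permutes_compose[OF \<sigma> \<rho>]] by simp
    also have "\<dots> = act_sign \<rho> \<mu> * act_sign \<sigma> \<mu>\<^sub>0"
      using act_sign_comp[OF permutes_inj[OF \<rho>] permutes_inj[OF \<sigma>] finite_snd_of_mons[OF \<mu>\<^sub>0]] \<mu>
      by simp
    finally show ?thesis
      using orbit_vector_act_mon[OF \<mu>\<^sub>0 distinct \<sigma>] \<mu> by simp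
  next
    case False
    have not_orbit: "\<not> (\<exists>\<sigma>. \<sigma> permutes {..<n} \<and> act_mon \<sigma> \<mu>\<^sub>0 = act_mon \<rho> \<mu>)"
    proof
      assume "\<exists>\<sigma>. \<sigma> permutes {..<n} \<and> act_mon \<sigma> \<mu>\<^sub>0 = act_mon \<rho> \<mu>"
      then obtain \<sigma> where \<sigma>: "\<sigma> permutes {..<n}" "act_mon \<sigma> \<mu>\<^sub>0 = act_mon \<rho> \<mu>" by blast
      then have "act_mon (inv \<rho> \<circ> \<sigma>) \<mu>\<^sub>0 = \<mu>"
        using act_mon_comp[OF permutes_bij[OF permutes_inv[OF \<rho>]] permutes_bij[OF \<sigma>(1)]]
          act_mon_inv_act_mon[OF \<rho>] by simp
      then show False
        using False permutes_compose[OF \<sigma>(1) permutes_inv[OF \<rho>]] by blast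
    qed
    have "orbit_vector n \<mu>\<^sub>0 \<mu> = 0"
      using False unfolding orbit_vector_def by (rule if_not_P)
    moreover have "orbit_vector n \<mu>\<^sub>0 (act_mon \<rho> \<mu>) = 0"
      using not_orbit unfolding orbit_vector_def by (rule if_not_P)
    ultimately show ?thesis by simp
  qed
  moreover have "orbit_vector n \<mu>\<^sub>0 \<mu> = 0" if "\<mu> \<notin> mons n m m' \<alpha> \<beta>" for \<mu>
    using orbit_vector_support[OF \<mu>\<^sub>0] that by blast
  ultimately show ?thesis
    by (simp add: inv_component_def)
qed

lemma finite_super_mset_partitions: "finite (super_mset_partitions n m m' \<alpha> \<beta>)"
proof -
  have "super_mset_partitions n m m' \<alpha> \<beta> \<subseteq> row_partition n m m' ` mons n m m' \<alpha> \<beta>"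
    using row_partition_surj by blast
  then show ?thesis
    by (rule finite_surj[OF finite_mons])
qed

lemma orbit_vector_self:
  assumes "\<mu>\<^sub>0 \<in> mons n m m' \<alpha> \<beta>" "odd_rows_distinct n m m' \<mu>\<^sub>0"
  shows "orbit_vector n \<mu>\<^sub>0 \<mu>\<^sub>0 = 1"
  using orbit_vector_act_mon[OF assms permutes_id] by simp

lemma inv_component_on_orbit:
  assumes f: "f \<in> inv_component n m m' \<alpha> \<beta>"
    and \<mu>\<^sub>0: "\<mu>\<^sub>0 \<in> mons n m m' \<alpha> \<beta>" "odd_rows_distinct n m m' \<mu>\<^sub>0"
    and \<mu>: "\<mu> \<in> mons n m m' \<alpha> \<beta>" "row_partition n m m' \<mu> = row_partition n m m' \<mu>\<^sub>0"
  shows "f \<mu> = f \<mu>\<^sub>0 * orbit_vector n \<mu>\<^sub>0 \<mu>"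
proof -
  obtain \<sigma> where \<sigma>: "\<sigma> permutes {..<n}" and \<sigma>\<mu>\<^sub>0: "act_mon \<sigma> \<mu>\<^sub>0 = \<mu>"
    using orbit_if_row_partition_eq[OF mon_in_range_if_mons[OF \<mu>\<^sub>0(1)] mon_in_range_if_mons[OF \<mu>(1)]] \<mu>(2)
    by metis
  have "orbit_vector n \<mu>\<^sub>0 \<mu> = act_sign \<sigma> \<mu>\<^sub>0"
    using orbit_vector_act_mon[OF \<mu>\<^sub>0 \<sigma>] \<sigma>\<mu>\<^sub>0 by simp
  moreover have "f \<mu> = act_sign \<sigma> \<mu>\<^sub>0 * f \<mu>\<^sub>0"
    using f \<sigma> \<sigma>\<mu>\<^sub>0 \<mu>\<^sub>0(1) by (auto simp: inv_component_def)
  ultimately show ?thesis by simp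
qed

context
  fixes n m m' :: nat and \<alpha> \<beta> :: "nat \<Rightarrow> nat" and rep :: "(nat + nat) multiset multiset \<Rightarrow> smon"
  assumes rep: "\<And>\<pi>. \<pi> \<in> super_mset_partitions n m m' \<alpha> \<beta> \<Longrightarrow>
    rep \<pi> \<in> mons n m m' \<alpha> \<beta> \<and> row_partition n m m' (rep \<pi>) = \<pi>"
begin

lemma odd_rows_distinct_rep: "\<pi> \<in> super_mset_partitions n m m' \<alpha> \<beta> \<Longrightarrow> odd_rows_distinct n m m' (rep \<pi>)"
  using row_partition_in_super_mset_partitions_iff[of "rep \<pi>" n m m' \<alpha> \<beta>] rep by simp

lemma orbit_vector_rep_support:
  assumes \<pi>: "\<pi> \<in> super_mset_partitions n m m' \<alpha> \<beta>" and "orbit_vector n (rep \<pi>) \<mu> \<noteq> 0"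
  shows "\<mu> \<in> mons n m m' \<alpha> \<beta> \<and> row_partition n m m' \<mu> = \<pi>"
  using orbit_vector_support[OF conjunct1[OF rep[OF \<pi>]] assms(2)] rep[OF \<pi>] by simp

lemma orbit_vector_rep_delta:
  assumes "\<pi> \<in> super_mset_partitions n m m' \<alpha> \<beta>" "\<pi>' \<in> super_mset_partitions n m m' \<alpha> \<beta>"
  shows "orbit_vector n (rep \<pi>) (rep \<pi>') = (if \<pi> = \<pi>' then 1 else 0)"
proof (cases "\<pi> = \<pi>'")
  case True
  then show ?thesis
    using orbit_vector_self[OF conjunct1[OF rep[OF assms(1)]] odd_rows_distinct_rep[OF assms(1)]] by simp
next
  case False
  then have "orbit_vector n (rep \<pi>) (rep \<pi>') = 0"
    using orbit_vector_rep_support[OF assms(1)] rep[OF assms(2)] by blast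
  then show ?thesis using False by simp
qed

lemma inv_component_expansion:
  assumes f: "f \<in> inv_component n m m' \<alpha> \<beta>"
  shows "f \<mu> = (\<Sum>\<pi> \<in> super_mset_partitions n m m' \<alpha> \<beta>. f (rep \<pi>) * orbit_vector n (rep \<pi>) \<mu>)"
proof (cases "\<mu> \<in> mons n m m' \<alpha> \<beta> \<and> odd_rows_distinct n m m' \<mu>")
  case True
  define \<pi>\<^sub>0 where "\<pi>\<^sub>0 = row_partition n m m' \<mu>"
  have \<pi>\<^sub>0: "\<pi>\<^sub>0 \<in> super_mset_partitions n m m' \<alpha> \<beta>"
    using True row_partition_in_super_mset_partitions_iff by (simp add: \<pi>\<^sub>0_def)
  have "orbit_vector n (rep \<pi>) \<mu> = 0" if "\<pi> \<in> super_mset_partitions n m m' \<alpha> \<beta> - {\<pi>\<^sub>0}" for \<pi>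
    using that orbit_vector_rep_support \<pi>\<^sub>0_def by blast
  then have "(\<Sum>\<pi> \<in> super_mset_partitions n m m' \<alpha> \<beta>. f (rep \<pi>) * orbit_vector n (rep \<pi>) \<mu>)
      = f (rep \<pi>\<^sub>0) * orbit_vector n (rep \<pi>\<^sub>0) \<mu>"
    using sum.remove[OF finite_super_mset_partitions \<pi>\<^sub>0, of "\<lambda>\<pi>. f (rep \<pi>) * orbit_vector n (rep \<pi>) \<mu>"]
    by simp
  moreover have "row_partition n m m' \<mu> = row_partition n m m' (rep \<pi>\<^sub>0)"
    using rep[OF \<pi>\<^sub>0] by (simp add: \<pi>\<^sub>0_def)
  then have "f \<mu> = f (rep \<pi>\<^sub>0) * orbit_vector n (rep \<pi>\<^sub>0) \<mu>"
    using inv_component_on_orbit[OF f conjunct1[OF rep[OF \<pi>\<^sub>0]] odd_rows_distinct_rep[OF \<pi>\<^sub>0]]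
      True by blast
  ultimately show ?thesis
    by simp
next
  case False
  have "f \<mu> = 0"
  proof (cases "\<mu> \<in> mons n m m' \<alpha> \<beta>")
    case True
    then show ?thesis using False f inv_component_vanishes by blast
  qed (use f in \<open>unfold inv_component_def, blast\<close>)
  moreover have "orbit_vector n (rep \<pi>) \<mu> = 0" if \<pi>: "\<pi> \<in> super_mset_partitions n m m' \<alpha> \<beta>" for \<pi>
  proof (rule ccontr)
    assume "orbit_vector n (rep \<pi>) \<mu> \<noteq> 0"
    then have "\<mu> \<in> mons n m m' \<alpha> \<beta>" "row_partition n m m' \<mu> = \<pi>"
      using orbit_vector_rep_support[OF \<pi>] by blast+
    then have "odd_rows_distinct n m m' \<mu>"
      using row_partition_in_super_mset_partitions_iff[of \<mu> n m m' \<alpha> \<beta>] \<pi> by simp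
    then show False
      using False \<open>\<mu> \<in> mons n m m' \<alpha> \<beta>\<close> by blast
  qed
  ultimately show ?thesis by simp
qed

end

theorem corollary4p1:
  fixes n m m' :: nat and \<alpha> \<beta> :: "nat \<Rightarrow> nat"
  assumes "n \<ge> 1"
  shows "cdim (inv_component n m m' \<alpha> \<beta>) = card (super_mset_partitions n m m' \<alpha> \<beta>)"
proof -
  let ?S = "super_mset_partitions n m m' \<alpha> \<beta>"
  have "\<forall>\<pi> \<in> ?S. \<exists>\<mu> \<in> mons n m m' \<alpha> \<beta>. row_partition n m m' \<mu> = \<pi>"
    using row_partition_surj by blast
  then obtain rep where rep: "\<And>\<pi>. \<pi> \<in> ?S \<Longrightarrow> rep \<pi> \<in> mons n m m' \<alpha> \<beta> \<and> row_partition n m m' (rep \<pi>) = \<pi>"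
    by metis
  show ?thesis
    unfolding cdim_def
  proof (rule dim_function_space_eq_card[where b = "\<lambda>\<pi>. orbit_vector n (rep \<pi>)" and x = rep])
    show "finite ?S"
      by (rule finite_super_mset_partitions)
    show "orbit_vector n (rep \<pi>) \<in> inv_component n m m' \<alpha> \<beta>" if "\<pi> \<in> ?S" for \<pi>
      using orbit_vector_in_inv_component rep odd_rows_distinct_rep[OF rep] that by blast
    show "orbit_vector n (rep \<pi>) (rep \<pi>') = (if \<pi> = \<pi>' then 1 else 0)"
      if "\<pi> \<in> ?S" "\<pi>' \<in> ?S" for \<pi> \<pi>'
      using orbit_vector_rep_delta[OF rep that] .
    show "f y = (\<Sum>\<pi> \<in> ?S. f (rep \<pi>) * orbit_vector n (rep \<pi>) y)"
      if "f \<in> inv_component n m m' \<alpha> \<beta>" for f y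
      using inv_component_expansion[OF rep that] .
  qed
qed

end
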